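(* Let $X=(A_1,\dots,A_k)$ be a Markov tree-shift over $\mathcal{A}=\{0,\dots,d-1\}$. Then $$\limsup_{n\to\infty}\frac{\log p(n)}{1+k+\cdots+k^n}\le\frac1k\Big(\log d+\log\|A_1\|_{op}+\cdots+\log\|A_k\|_{op}\Big),$$ so in particular $h_{PS}(X)\le\frac1k(\log d+\sum_{m=1}^k\log\|A_m\|_{op})$ whenever $h_{PS}(X)$ exists.
   Context: $\Sigma=\{a_1,\dots,a_k\}$, $k\ge2$. For $\{0,1\}$-valued $d\times d$ matrices $A_1,\dots,A_k$ (each row and column of each containing at least one $1$), $X=(A_1,\dots,A_k)$ is the set of trees $t:\Sigma^*\to\mathcal{A}$ with $(A_m)_{t_x,t_{xa_m}}=1$ for all nodes $x$ and all $m$. $p(n)$ is the number of allowed blocks of length $n$ (labellings $t|_{\Delta_n}$, $t\in X$, $\Delta_n=\bigcup_{i=0}^n\Sigma^i$). $h_{PS}(X)=\lim_n\frac{\log p(n)}{1+k+\cdots+k^n}$. $\|M\|_{op}=\sup_{\|v\|_\infty=1}\|Mv\|_\infty$ with $\|v\|_\infty=\max_i|v_i|$; for a nonnegative matrix this is the maximal row sum. *)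

theory Defs
  imports Complex_Main "HOL-Library.FuncSet" "HOL-Library.Extended_Real"
begin

text \<open>Alphabet \<Sigma> = {a_1,...,a_k} is represented by the indices 0..k-1 (a_{m+1} ~ m);
  nodes of the tree are words in lists {..<k}; the symbol alphabet is {0,...,d-1};
  the transition matrices A_1..A_k are given as A 0, ..., A (k-1), each a
  d x d real matrix indexed by {0..<d}.\<close>

definition words :: "nat \<Rightarrow> nat list set" where
  "words k = lists {..<k}"

definition Delta :: "nat \<Rightarrow> nat \<Rightarrow> nat list set" where
  "Delta k n = {w \<in> words k. length w \<le> n}"

definition tree_shift :: "nat \<Rightarrow> nat \<Rightarrow> (nat \<Rightarrow> nat \<Rightarrow> nat \<Rightarrow> real) \<Rightarrow> (nat list \<Rightarrow> nat) set" where
  "tree_shift k d A = {t. (\<forall>w\<in>words k. t w < d) \<and>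
      (\<forall>w\<in>words k. \<forall>m<k. A m (t w) (t (w @ [m])) = 1)}"

definition num_blocks :: "nat \<Rightarrow> nat \<Rightarrow> (nat \<Rightarrow> nat \<Rightarrow> nat \<Rightarrow> real) \<Rightarrow> nat \<Rightarrow> nat" where
  "num_blocks k d A n = card ((\<lambda>t. restrict t (Delta k n)) ` tree_shift k d A)"

definition sup_norm :: "nat \<Rightarrow> (nat \<Rightarrow> real) \<Rightarrow> real" where
  "sup_norm d v = (MAX i\<in>{..<d}. \<bar>v i\<bar>)"

definition op_norm :: "nat \<Rightarrow> (nat \<Rightarrow> nat \<Rightarrow> real) \<Rightarrow> real" where
  "op_norm d M = Sup {sup_norm d (\<lambda>i. \<Sum>j<d. M i j * v j) | v. sup_norm d v = 1}"

definition markov_matrices :: "nat \<Rightarrow> nat \<Rightarrow> (nat \<Rightarrow> nat \<Rightarrow> nat \<Rightarrow> real) \<Rightarrow> bool" where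
  "markov_matrices k d A \<longleftrightarrow>
     (\<forall>m<k. (\<forall>i<d. \<forall>j<d. A m i j = 0 \<or> A m i j = 1) \<and>
            (\<forall>i<d. \<exists>j<d. A m i j = 1) \<and> (\<forall>j<d. \<exists>i<d. A m i j = 1))"

end

theory Submission imports Defs begin

text \<open>Every allowed block of length \<open>n\<close> is a labelling of \<open>\<Delta>\<^sub>n\<close> that respects the transition
  constraints inside \<open>\<Delta>\<^sub>n\<close>. Such labellings are counted level by level: the root has at most
  \<open>d\<close> labels, and a node reached from its parent by the edge \<open>a\<^sub>m\<close> has at most the number of
  ones in a row of \<open>A\<^sub>m\<close>, i.e. at most \<open>\<parallel>A\<^sub>m\<parallel>\<close>, labels. A level of \<open>k\<^sup>n\<close> parents thus contributes
  the factor \<open>(\<parallel>A\<^sub>1\<parallel> \<cdots> \<parallel>A\<^sub>k\<parallel>)\<^bsup>k\<^sup>n\<^esup>\<close>, whence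
  \<open>p(n) \<le> d (\<parallel>A\<^sub>1\<parallel> \<cdots> \<parallel>A\<^sub>k\<parallel>)\<^bsup>1 + k + \<cdots> + k\<^sup>n\<^sup>-\<^sup>1\<^esup>\<close>.\<close>

definition level :: "nat \<Rightarrow> nat \<Rightarrow> nat list set" where
  "level k n = {w \<in> words k. length w = n}"

lemma level_Suc: "level k (Suc n) = (\<lambda>(u, m). u @ [m]) ` (level k n \<times> {..<k})"
proof (rule set_eqI, rule iffI)
  fix w assume w: "w \<in> level k (Suc n)"
  then have "w \<noteq> []" by (auto simp: level_def)
  moreover have "butlast w \<in> level k n" "last w < k"
    using w \<open>w \<noteq> []\<close> by (auto simp: level_def words_def in_set_butlastD)
  ultimately show "w \<in> (\<lambda>(u, m). u @ [m]) ` (level k n \<times> {..<k})"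
    by (intro image_eqI[of _ _ "(butlast w, last w)"]) auto
qed (auto simp: level_def words_def)

lemma inj_on_snoc: "inj_on (\<lambda>(u, m). u @ [m]) X"
  by (auto simp: inj_on_def)

lemma finite_level: "finite (level k n)"
  and card_level: "card (level k n) = k ^ n"
proof (induction n)
  case 0
  have "level k 0 = {[]}" by (auto simp: level_def words_def)
  { case 1 show ?case by (simp add: \<open>level k 0 = {[]}\<close>) }
  { case 2 show ?case by (simp add: \<open>level k 0 = {[]}\<close>) }
next
  case (Suc n)
  { case 1 show ?case using Suc.IH(1) by (simp add: level_Suc) }
  { case 2 show ?case using Suc.IH
      by (simp add: level_Suc card_image[OF inj_on_snoc] card_cartesian_product) }
qed

lemma prod_level_Suc_last:
  "(\<Prod>w\<in>level k (Suc n). f (last w)) = (\<Prod>m<k. f m) ^ (k ^ n)"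
proof -
  have "(\<Prod>w\<in>level k (Suc n). f (last w)) = (\<Prod>(u, m)\<in>level k n \<times> {..<k}. f m)"
    unfolding level_Suc by (subst prod.reindex[OF inj_on_snoc]) (auto intro: prod.cong)
  also have "\<dots> = (\<Prod>u\<in>level k n. \<Prod>m<k. f m)"
    by (rule prod.cartesian_product[symmetric])
  also have "\<dots> = (\<Prod>m<k. f m) ^ (k ^ n)"
    by (simp add: card_level)
  finally show ?thesis .
qed

lemma Delta_Suc: "Delta k (Suc n) = Delta k n \<union> level k (Suc n)"
  by (auto simp: Delta_def level_def)

lemma Delta_0: "Delta k 0 = {[]}"
  by (auto simp: Delta_def words_def)

lemma level_Suc_parent:
  assumes "w \<in> level k (Suc n)"
  shows "w = butlast w @ [last w]" "butlast w \<in> Delta k n" "last w < k"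
proof -
  have "w \<noteq> []" using assms by (auto simp: level_def)
  then show "w = butlast w @ [last w]" "butlast w \<in> Delta k n" "last w < k"
    using assms by (auto simp: level_def Delta_def words_def in_set_butlastD)
qed

lemma finite_Delta: "finite (Delta k n)"
  by (induction n) (simp_all add: Delta_0 Delta_Suc finite_level)

definition admissible_patterns ::
    "nat \<Rightarrow> nat \<Rightarrow> (nat \<Rightarrow> nat \<Rightarrow> nat \<Rightarrow> real) \<Rightarrow> nat \<Rightarrow> (nat list \<Rightarrow> nat) set" where
  "admissible_patterns k d A n = {f \<in> Delta k n \<rightarrow>\<^sub>E {..<d}.
      \<forall>w\<in>words k. length w < n \<longrightarrow> (\<forall>m<k. A m (f w) (f (w @ [m])) = 1)}"

lemma finite_admissible_patterns: "finite (admissible_patterns k d A n)"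
proof (rule finite_subset)
  show "admissible_patterns k d A n \<subseteq> Delta k n \<rightarrow>\<^sub>E {..<d}"
    by (auto simp: admissible_patterns_def)
qed (intro finite_PiE finite_Delta finite_lessThan)

lemma restrict_tree_shift_admissible:
  assumes "t \<in> tree_shift k d A"
  shows "restrict t (Delta k n) \<in> admissible_patterns k d A n"
proof -
  have "w @ [m] \<in> Delta k n" if "w \<in> words k" "length w < n" "m < k" for w m
    using that by (auto simp: Delta_def words_def)
  then show ?thesis
    using assms by (auto simp: admissible_patterns_def tree_shift_def Delta_def)
qed

lemma num_blocks_le_card_admissible_patterns:
  "num_blocks k d A n \<le> card (admissible_patterns k d A n)"
  unfolding num_blocks_def
  by (intro card_mono finite_admissible_patterns) (auto intro: restrict_tree_shift_admissible)

text \<open>The parent of a node \<open>w \<noteq> []\<close> is \<open>butlast w\<close>, joined to it by the edge \<open>last w\<close>.\<close>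

definition allowed_labels ::
    "nat \<Rightarrow> (nat \<Rightarrow> nat \<Rightarrow> nat \<Rightarrow> real) \<Rightarrow> (nat list \<Rightarrow> nat) \<Rightarrow> nat list \<Rightarrow> nat set" where
  "allowed_labels d A g w = {j. j < d \<and> A (last w) (g (butlast w)) j = 1}"

lemma finite_allowed_labels: "finite (allowed_labels d A g w)"
  by (simp add: allowed_labels_def)

lemma admissible_patterns_Suc_split:
  assumes "f \<in> admissible_patterns k d A (Suc n)"
  shows "restrict f (Delta k n) \<in> admissible_patterns k d A n"
    and "restrict f (level k (Suc n))
           \<in> PiE (level k (Suc n)) (allowed_labels d A (restrict f (Delta k n)))"
proof -
  have f: "f \<in> Delta k (Suc n) \<rightarrow>\<^sub>E {..<d}"
    and edge: "\<And>w m. w \<in> words k \<Longrightarrow> length w \<le> n \<Longrightarrow> m < k \<Longrightarrow> A m (f w) (f (w @ [m])) = 1"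
    using assms by (auto simp: admissible_patterns_def)
  have "w \<in> Delta k n \<and> w @ [m] \<in> Delta k n" if "w \<in> words k" "length w < n" "m < k" for w m
    using that by (auto simp: Delta_def words_def)
  then show "restrict f (Delta k n) \<in> admissible_patterns k d A n"
    using f edge by (auto simp: admissible_patterns_def Delta_Suc)
  show "restrict f (level k (Suc n))
          \<in> PiE (level k (Suc n)) (allowed_labels d A (restrict f (Delta k n)))"
  proof (rule PiE_I)
    fix w assume w: "w \<in> level k (Suc n)"
    note level_Suc_parent[OF w]
    moreover have "f w < d" using f w by (auto simp: Delta_Suc)
    ultimately show "restrict f (level k (Suc n)) w \<in> allowed_labels d A (restrict f (Delta k n)) w"
      using w edge[of "butlast w" "last w"] by (auto simp: allowed_labels_def Delta_def)
  qed auto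
qed

lemma card_admissible_patterns_Suc:
  "card (admissible_patterns k d A (Suc n))
     \<le> (\<Sum>g\<in>admissible_patterns k d A n. \<Prod>w\<in>level k (Suc n). card (allowed_labels d A g w))"
proof -
  let ?P = "admissible_patterns k d A" and ?L = "level k (Suc n)"
  define split where "split f = (restrict f (Delta k n), restrict f ?L)" for f :: "nat list \<Rightarrow> nat"
  have "inj_on split (?P (Suc n))"
  proof (rule inj_onI)
    fix f g assume "f \<in> ?P (Suc n)" "g \<in> ?P (Suc n)" and "split f = split g"
    then have "f \<in> Delta k n \<union> ?L \<rightarrow>\<^sub>E {..<d}" "g \<in> Delta k n \<union> ?L \<rightarrow>\<^sub>E {..<d}"
      and "\<forall>x\<in>Delta k n. f x = g x" "\<forall>x\<in>?L. f x = g x"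
      by (auto simp: split_def admissible_patterns_def Delta_Suc fun_eq_iff restrict_def
          split: if_splits)
    then show "f = g"
      by (intro extensionalityI[of _ "Delta k n \<union> ?L"]) (auto simp: PiE_def)
  qed
  moreover have "split ` ?P (Suc n) \<subseteq> Sigma (?P n) (\<lambda>g. PiE ?L (allowed_labels d A g))"
    unfolding split_def using admissible_patterns_Suc_split by (blast intro: SigmaI)
  moreover have "finite (Sigma (?P n) (\<lambda>g. PiE ?L (allowed_labels d A g)))"
    by (intro finite_SigmaI finite_admissible_patterns finite_PiE finite_level finite_allowed_labels)
  ultimately have "card (?P (Suc n)) \<le> card (Sigma (?P n) (\<lambda>g. PiE ?L (allowed_labels d A g)))"
    by (rule card_inj_on_le)
  also have "\<dots> = (\<Sum>g\<in>?P n. \<Prod>w\<in>?L. card (allowed_labels d A g w))"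
    by (simp add: card_SigmaI finite_admissible_patterns finite_PiE finite_level
        finite_allowed_labels card_PiE)
  finally show ?thesis .
qed

lemma row_sum_le_op_norm:
  assumes "i < d"
  shows "(\<Sum>j<d. M i j) \<le> op_norm d M"
proof -
  let ?S = "{sup_norm d (\<lambda>i. \<Sum>j<d. M i j * v j) | v. sup_norm d v = 1}"
  have ne: "{..<d} \<noteq> {}" using assms by auto
  have "sup_norm d (\<lambda>_. 1) = 1"
    using ne by (simp add: sup_norm_def Max_const)
  then have mem: "sup_norm d (\<lambda>i. \<Sum>j<d. M i j) \<in> ?S"
    by (auto intro!: exI[of _ "\<lambda>_. 1"])
  have bdd: "bdd_above ?S"
  proof (rule bdd_aboveI, clarify)
    fix v assume v: "sup_norm d v = 1"
    have v_bound: "\<bar>v j\<bar> \<le> 1" if "j < d" for j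
      using v that unfolding sup_norm_def by (metis Max_ge finite_imageI finite_lessThan imageI lessThan_iff)
    have "\<bar>\<Sum>j<d. M i j * v j\<bar> \<le> (\<Sum>i<d. \<Sum>j<d. \<bar>M i j\<bar>)" if "i < d" for i
    proof -
      have "\<bar>\<Sum>j<d. M i j * v j\<bar> \<le> (\<Sum>j<d. \<bar>M i j\<bar>)"
        using v_bound by (intro order_trans[OF sum_abs] sum_mono) (auto simp: abs_mult intro: mult_left_le)
      also have "\<dots> \<le> (\<Sum>i<d. \<Sum>j<d. \<bar>M i j\<bar>)"
        using that by (intro member_le_sum[where f="\<lambda>i. \<Sum>j<d. \<bar>M i j\<bar>"]) auto
      finally show ?thesis .
    qed
    then show "sup_norm d (\<lambda>i. \<Sum>j<d. M i j * v j) \<le> (\<Sum>i<d. \<Sum>j<d. \<bar>M i j\<bar>)"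
      using ne by (simp add: sup_norm_def)
  qed
  have "(\<Sum>j<d. M i j) \<le> sup_norm d (\<lambda>i. \<Sum>j<d. M i j)"
    unfolding sup_norm_def using assms by (intro order_trans[OF abs_ge_self Max_ge]) auto
  also have "\<dots> \<le> op_norm d M"
    unfolding op_norm_def by (rule cSup_upper[OF mem bdd])
  finally show ?thesis .
qed

lemma card_ones_in_row_le_op_norm:
  assumes "i < d" and "\<And>j. j < d \<Longrightarrow> 0 \<le> M i j"
  shows "real (card {j. j < d \<and> M i j = 1}) \<le> op_norm d M"
proof -
  have "real (card {j. j < d \<and> M i j = 1}) = (\<Sum>j\<in>{j. j < d \<and> M i j = 1}. M i j)"
    by simp
  also have "\<dots> \<le> (\<Sum>j<d. M i j)"
    using assms(2) by (intro sum_mono2) auto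
  also have "\<dots> \<le> op_norm d M"
    using assms(1) by (rule row_sum_le_op_norm)
  finally show ?thesis .
qed

context
  fixes k d :: nat and A :: "nat \<Rightarrow> nat \<Rightarrow> nat \<Rightarrow> real"
  assumes markov: "markov_matrices k d A" and d_pos: "d \<ge> 1"
begin

lemma card_successors_le_op_norm:
  assumes "m < k" and "i < d"
  shows "real (card {j. j < d \<and> A m i j = 1}) \<le> op_norm d (A m)"
proof (rule card_ones_in_row_le_op_norm[OF assms(2)])
  fix j assume "j < d"
  then have "A m i j = 0 \<or> A m i j = 1"
    using markov assms unfolding markov_matrices_def by blast
  then show "0 \<le> A m i j" by auto
qed

lemma op_norm_ge_1:
  assumes "m < k"
  shows "1 \<le> op_norm d (A m)"
proof -
  obtain j where "j < d" "A m 0 j = 1"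
    using markov assms d_pos unfolding markov_matrices_def by force
  then have "{j. j < d \<and> A m 0 j = 1} \<noteq> {}"
    by blast
  then have "card {j. j < d \<and> A m 0 j = 1} \<ge> 1"
    by (simp add: Suc_le_eq card_gt_0_iff)
  then show ?thesis
    using card_successors_le_op_norm[OF assms, of 0] d_pos by linarith
qed

lemma card_admissible_patterns_le:
  "real (card (admissible_patterns k d A n))
     \<le> real d * (\<Prod>m<k. op_norm d (A m)) ^ (\<Sum>i<n. k ^ i)"
proof (induction n)
  case 0
  have "card (admissible_patterns k d A 0) \<le> card ({[]::nat list} \<rightarrow>\<^sub>E {..<d})"
    by (intro card_mono finite_PiE) (auto simp: admissible_patterns_def Delta_0)
  then show ?case by (simp add: card_PiE)
next
  case (Suc n)
  let ?P = "admissible_patterns k d A" and ?N = "\<Prod>m<k. op_norm d (A m)"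
  have N_nonneg: "0 \<le> ?N"
    using op_norm_ge_1 by (intro prod_nonneg) (auto intro: order_trans[OF zero_le_one])
  have label_bound: "real (card (allowed_labels d A g w)) \<le> op_norm d (A (last w))"
    if "g \<in> ?P n" "w \<in> level k (Suc n)" for g w
  proof -
    note level_Suc_parent[OF that(2)]
    then show ?thesis
      using that(1) unfolding allowed_labels_def
      by (intro card_successors_le_op_norm) (auto simp: admissible_patterns_def)
  qed
  have "real (card (?P (Suc n)))
          \<le> (\<Sum>g\<in>?P n. \<Prod>w\<in>level k (Suc n). real (card (allowed_labels d A g w)))"
    using of_nat_mono[OF card_admissible_patterns_Suc] by simp
  also have "\<dots> \<le> (\<Sum>g\<in>?P n. \<Prod>w\<in>level k (Suc n). op_norm d (A (last w)))"
    using label_bound by (intro sum_mono prod_mono) auto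
  also have "\<dots> = real (card (?P n)) * ?N ^ (k ^ n)"
    by (simp add: prod_level_Suc_last[where f = "\<lambda>m. op_norm d (A m)"])
  also have "\<dots> \<le> real d * ?N ^ (\<Sum>i<n. k ^ i) * ?N ^ (k ^ n)"
    using Suc.IH N_nonneg by (intro mult_right_mono) auto
  also have "\<dots> = real d * ?N ^ (\<Sum>i<Suc n. k ^ i)"
    by (simp add: power_add)
  finally show ?case .
qed

end

lemma sum_power_atMost_eq: "(\<Sum>i\<le>n. real k ^ i) = 1 + real k * real (\<Sum>i<n. k ^ i)"
  by (induction n) (auto simp: algebra_simps)

lemma geometric_weight_ratio_le:
  fixes a L :: real and k E :: nat
  assumes "0 \<le> a" "0 \<le> L" "1 \<le> E" "0 < k"
  shows "(a + real E * L) / (1 + real k * real E) \<le> (a + L) / real k"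
proof -
  have "a * k \<le> a * (k * E)" and "E * L * k \<le> L * (k * E)"
    using assms by (simp_all add: mult_left_mono)
  then have "(a + E * L) * k \<le> (a + L) * (1 + k * E)"
    using assms by (simp add: algebra_simps)
  moreover have "0 < 1 + real k * real E"
    using assms by (simp add: add_pos_nonneg)
  ultimately show ?thesis
    using assms by (simp add: divide_le_eq le_divide_eq mult.commute)
qed

lemma block_entropy_le:
  assumes "k \<ge> 1" and "d \<ge> 1" and "markov_matrices k d A" and "n \<ge> 1"
  shows "ln (real (num_blocks k d A n)) / (\<Sum>i\<le>n. real k ^ i)
           \<le> (ln (real d) + (\<Sum>m<k. ln (op_norm d (A m)))) / real k"
proof -
  let ?L = "\<Sum>m<k. ln (op_norm d (A m))" and ?E = "\<Sum>i<n. k ^ i"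
  have norm_ge_1: "\<And>m. m < k \<Longrightarrow> 1 \<le> op_norm d (A m)"
    by (rule op_norm_ge_1[OF assms(3,2)])
  then have norm_pos: "\<And>m. m < k \<Longrightarrow> 0 < op_norm d (A m)"
    by (rule less_le_trans[OF zero_less_one])
  have N_pos: "0 < (\<Prod>m<k. op_norm d (A m))"
    using norm_pos by (intro prod_pos) auto
  have ln_N: "ln (\<Prod>m<k. op_norm d (A m)) = ?L"
    using norm_pos by (intro ln_prod) (auto simp: less_imp_neq[THEN not_sym])
  have L_nonneg: "0 \<le> ?L"
    using norm_ge_1 by (intro sum_nonneg) simp
  have ln_blocks: "ln (real (num_blocks k d A n)) \<le> ln (real d) + ?E * ?L"
  proof (cases "num_blocks k d A n = 0")
    case True
    then show ?thesis
      using assms(2) L_nonneg by (auto intro!: add_nonneg_nonneg mult_nonneg_nonneg sum_nonneg)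
  next
    case False
    have "real (num_blocks k d A n) \<le> real d * (\<Prod>m<k. op_norm d (A m)) ^ ?E"
      using num_blocks_le_card_admissible_patterns card_admissible_patterns_le[OF assms(3,2)]
      by (rule order_trans[OF of_nat_mono])
    then have "ln (real (num_blocks k d A n)) \<le> ln (real d * (\<Prod>m<k. op_norm d (A m)) ^ ?E)"
      using False assms(2) N_pos by (subst ln_le_cancel_iff) auto
    also have "\<dots> = ln (real d) + ?E * ?L"
      using assms(2) by (simp add: ln_mult_pos[OF _ zero_less_power[OF N_pos]] ln_realpow ln_N)
    finally show ?thesis .
  qed
  have E_ge_1: "1 \<le> ?E"
    using assms(4) by (intro member_le_sum[of 0, THEN order_trans[rotated]]) auto
  have "ln (real (num_blocks k d A n)) / (\<Sum>i\<le>n. real k ^ i)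
          \<le> (ln (real d) + ?E * ?L) / (1 + real k * ?E)"
    unfolding sum_power_atMost_eq using ln_blocks
    by (intro divide_right_mono) (auto intro!: add_nonneg_nonneg mult_nonneg_nonneg sum_nonneg)
  also have "\<dots> \<le> (ln (real d) + ?L) / real k"
    using assms(1,2) L_nonneg E_ge_1 by (intro geometric_weight_ratio_le) auto
  finally show ?thesis .
qed

theorem mainTheorem8:
  fixes k d :: nat and A :: "nat \<Rightarrow> nat \<Rightarrow> nat \<Rightarrow> real"
  assumes "k \<ge> 2" and "d \<ge> 1" and "markov_matrices k d A"
  defines "B \<equiv> (ln (real d) + (\<Sum>m<k. ln (op_norm d (A m)))) / real k"
  shows "limsup (\<lambda>n. ereal (ln (real (num_blocks k d A n)) / (\<Sum>i\<le>n. real k ^ i)))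
           \<le> ereal B
         \<and> (\<forall>h. ((\<lambda>n. ln (real (num_blocks k d A n)) / (\<Sum>i\<le>n. real k ^ i)) \<longlonglongrightarrow> h)
                 \<longrightarrow> h \<le> B)"
proof -
  have "eventually (\<lambda>n. ln (real (num_blocks k d A n)) / (\<Sum>i\<le>n. real k ^ i) \<le> B) sequentially"
    using assms unfolding B_def by (intro eventually_sequentiallyI[of 1] block_entropy_le) auto
  then show ?thesis
    by (auto intro: Limsup_bounded tendsto_upperbound elim: eventually_mono)
qed

end
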